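(* Let $M\ge \frac52$ and $\mu=\frac{2}{2M+3}$. Algorithm A (defined in the context) is a valid semi-online algorithm with migration factor at most $M$, and for every input whose optimal offline makespan is $1$ it produces a schedule of makespan at most $1+\mu=\frac{2M+5}{2M+3}$. Hence its competitive ratio is at most $\frac{2M+5}{2M+3}$.
   Context: Model (two hierarchical machines with migration, bin stretching). Jobs $1,2,\dots,n$ arrive one by one ($n$ unknown in advance). Job $j$ has a size $p_j>0$ and a grade of service (GoS) $g_j\in\{1,2\}$; a job of GoS $1$ may only be processed on machine $m_1$, a job of GoS $2$ may be processed on $m_1$ or on $m_2$. The load of a machine is the total size of the jobs assigned to it, and the makespan is the maximum load. When job $j$ arrives, the algorithm must assign it to a machine, and at the same time it may reassign (migrate) previously arrived jobs to other machines (respecting the GoS constraints), provided that the total size of the migrated jobs is at most $M\cdot p_j$; $M\ge 0$ is the migration factor. Bin stretching: the optimal offline makespan of the complete input is known in advance and scaled to $1$; in particular every job has size at most $1$, the total size of all jobs is at most $2$, and the total size of all GoS-$1$ jobs is at most $1$. The competitive ratio of an algorithm is the supremum over inputs of (algorithm's makespan)/(optimal makespan). Notation: $Y_{j}$ is the set of jobs on $m_2$ just after job $j$ has been handled (including migrations), $y_j$ its total size, $y_0=0$. $Z$ denotes the set of GoS-2 jobs currently on $m_1$. Algorithm A (with $\mu=\frac{2}{2M+3}$). On arrival of job $j$: (i) if $g_j=1$ or $y_{j-1}\ge 1-\mu$, assign $j$ to $m_1$; (ii) else if $y_{j-1}+p_j\le 1+\mu$, assign $j$ to $m_2$; (iii)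 otherwise, among all GoS-2 jobs arrived so far (the current $Z$, the current $Y_{j-1}$, and $j$), choose a subset $W$ of maximum total size subject to total size at most $1$; rearrange so that exactly the jobs of $W$ are on $m_2$ and all other arrived jobs are on $m_1$. *)

theory Defs
  imports Complex_Main
begin

text \<open>Job j has size p j and grade of service g j (1 or 2).
  A schedule of the jobs in A (arrived jobs) is described by the set Y of jobs on machine m2;
  all other jobs of A are on machine m1.\<close>

definition gos2_jobs :: "(nat \<Rightarrow> nat) \<Rightarrow> nat \<Rightarrow> nat set" where
  "gos2_jobs g j = {i \<in> {1..j}. g i = 2}"

definition load1 :: "(nat \<Rightarrow> real) \<Rightarrow> nat \<Rightarrow> nat set \<Rightarrow> real" where
  "load1 p j Y = sum p ({1..j} - Y)"

definition load2 :: "(nat \<Rightarrow> real) \<Rightarrow> nat set \<Rightarrow> real" where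
  "load2 p Y = sum p Y"

definition makespan :: "(nat \<Rightarrow> real) \<Rightarrow> nat \<Rightarrow> nat set \<Rightarrow> real" where
  "makespan p j Y = max (load1 p j Y) (load2 p Y)"

definition opt_makespan :: "(nat \<Rightarrow> real) \<Rightarrow> (nat \<Rightarrow> nat) \<Rightarrow> nat \<Rightarrow> real" where
  "opt_makespan p g n = Min ((\<lambda>S. makespan p n S) ` Pow (gos2_jobs g n))"

definition mu :: "real \<Rightarrow> real" where
  "mu M = 2 / (2 * M + 3)"

text \<open>One step of Algorithm A: Yprev = Y_{j-1}, Ynew = Y_j. Step (iii) may choose any
  maximum-size subset W (ties arbitrary), so the algorithm is described as a relation.\<close>
definition algA_step ::
  "real \<Rightarrow> (nat \<Rightarrow> real) \<Rightarrow> (nat \<Rightarrow> nat) \<Rightarrow> nat \<Rightarrow> nat set \<Rightarrow> nat set \<Rightarrow> bool" where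
  "algA_step M p g j Yprev Ynew =
     (if g j = 1 \<or> sum p Yprev \<ge> 1 - mu M then Ynew = Yprev
      else if sum p Yprev + p j \<le> 1 + mu M then Ynew = insert j Yprev
      else (Ynew \<subseteq> gos2_jobs g j \<and> sum p Ynew \<le> 1 \<and>
            (\<forall>W. W \<subseteq> gos2_jobs g j \<and> sum p W \<le> 1 \<longrightarrow> sum p W \<le> sum p Ynew)))"

definition algA_run ::
  "real \<Rightarrow> (nat \<Rightarrow> real) \<Rightarrow> (nat \<Rightarrow> nat) \<Rightarrow> nat \<Rightarrow> (nat \<Rightarrow> nat set) \<Rightarrow> bool" where
  "algA_run M p g n Y = (Y 0 = {} \<and> (\<forall>j\<in>{1..n}. algA_step M p g j (Y (j - 1)) (Y j)))"

text \<open>Total size of previously arrived jobs migrated when job j is handled.\<close>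
definition migrated :: "(nat \<Rightarrow> real) \<Rightarrow> nat \<Rightarrow> nat set \<Rightarrow> nat set \<Rightarrow> real" where
  "migrated p j Yprev Ynew = sum p (((Yprev - Ynew) \<union> (Ynew - Yprev)) \<inter> {1..<j})"

end

theory Submission
  imports Defs
begin

text \<open>Throughout, \<open>m\<^sub>2\<close> either carries load at least \<open>1 - \<mu>\<close>, or it carries a subset of the
  GoS-2 jobs of maximum total size among those of size at most 1. Together with the optimal
  schedule, which splits the GoS-2 jobs into two parts of size at most 1, the second alternative
  bounds the load of \<open>m\<^sub>1\<close> by 1, and the first one bounds it by \<open>2 - (1 - \<mu>)\<close>. When step (iii)
  repacks, the new job \<open>j\<close> is large, \<open>p\<^sub>j > 1 + \<mu> - y\<^sub>j\<^sub>-\<^sub>1\<close> with \<open>y\<^sub>j\<^sub>-\<^sub>1 < 1 - \<mu>\<close>, while the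
  migrated jobs have total size at most \<open>y\<^sub>j\<^sub>-\<^sub>1 + 1 - p\<^sub>j\<close>; the choice of \<open>\<mu>\<close> makes this at most \<open>M p\<^sub>j\<close>.\<close>

lemma gos2_jobs_subset: "gos2_jobs g k \<subseteq> {1..k}"
  by (auto simp: gos2_jobs_def)

lemma finite_gos2_jobs [simp]: "finite (gos2_jobs g k)"
  using gos2_jobs_subset by (rule finite_subset) simp

lemma gos2_jobs_0 [simp]: "gos2_jobs g 0 = {}"
  by (auto simp: gos2_jobs_def)

lemma gos2_jobs_Suc:
  "gos2_jobs g (Suc k) =
     (if g (Suc k) = 2 then insert (Suc k) (gos2_jobs g k) else gos2_jobs g k)"
  by (auto simp: gos2_jobs_def le_Suc_eq)

lemma Suc_notin_gos2_jobs: "Suc k \<notin> gos2_jobs g k"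
  using gos2_jobs_subset by fastforce

lemma mu_pos: "0 \<le> M \<Longrightarrow> 0 < mu M"
  by (simp add: mu_def)

lemma one_plus_mu: "0 \<le> M \<Longrightarrow> 1 + mu M = (2 * M + 5) / (2 * M + 3)"
  by (simp add: mu_def field_simps)

lemma mu_migration_bound:
  assumes "0 \<le> M" and "y < 1 - mu M" and "1 + mu M < y + q"
  shows "y + 1 \<le> (M + 1) * q"
proof -
  have "2 * M + 3 \<noteq> 0"
    using assms(1) by simp
  then have mu: "(2 * M + 3) * mu M = 2"
    by (simp add: mu_def field_simps)
  have "(M + 2) * y \<le> (M + 2) * (1 - mu M)"
    using assms(1,2) by (intro mult_left_mono) auto
  moreover have "(M + 1) * (1 + mu M - y) \<le> (M + 1) * q"
    using assms(1,3) by (intro mult_left_mono) auto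
  ultimately show ?thesis
    using mu by (simp add: algebra_simps)
qed

lemma ex_max_bounded_subset:
  fixes f :: "'a \<Rightarrow> real"
  assumes "finite A" and "0 \<le> c"
  shows "\<exists>W\<subseteq>A. sum f W \<le> c \<and> (\<forall>V\<subseteq>A. sum f V \<le> c \<longrightarrow> sum f V \<le> sum f W)"
proof -
  let ?F = "{W. W \<subseteq> A \<and> sum f W \<le> c}"
  have "?F \<subseteq> Pow A"
    by blast
  then have fin: "finite ?F"
    using assms(1) by (rule finite_subset[OF _ finite_Pow_iff[THEN iffD2]])
  moreover have "{} \<in> ?F"
    using assms(2) by simp
  ultimately have "Max (sum f ` ?F) \<in> sum f ` ?F"
    by (intro Max_in finite_imageI) blast+
  then obtain W where W: "Max (sum f ` ?F) = sum f W" "W \<in> ?F"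
    by (rule imageE)
  have "sum f V \<le> sum f W" if "V \<in> ?F" for V
  proof -
    have "sum f V \<le> Max (sum f ` ?F)"
      using fin that by simp
    then show ?thesis
      using W(1) by simp
  qed
  then show ?thesis
    using W(2) by blast
qed

lemma sum_le_twice_max_bounded_subset:
  fixes f :: "'a \<Rightarrow> real"
  assumes "finite G" and "sum f (G \<inter> S) \<le> c" and "sum f (G - S) \<le> c"
    and max: "\<And>V. V \<subseteq> G \<Longrightarrow> sum f V \<le> c \<Longrightarrow> sum f V \<le> sum f W"
  shows "sum f G \<le> 2 * sum f W"
proof -
  have "sum f G = sum f (G \<inter> S) + sum f (G - S)"
    using assms(1) by (rule sum.Int_Diff)
  also have "\<dots> \<le> sum f W + sum f W"
    using assms(2,3) by (intro add_mono max) auto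
  finally show ?thesis
    by simp
qed

lemma opt_makespan_witness:
  assumes "opt_makespan p g n = c"
  obtains S where "S \<subseteq> gos2_jobs g n" and "sum p S \<le> c" and "sum p ({1..n} - S) \<le> c"
proof -
  have "opt_makespan p g n \<in> (\<lambda>S. makespan p n S) ` Pow (gos2_jobs g n)"
    unfolding opt_makespan_def by (intro Min_in) auto
  then show ?thesis
    using assms that by (auto simp: makespan_def load1_def load2_def)
qed

lemma algA_step_exists: "\<exists>Z. algA_step M p g j Y Z"
  using ex_max_bounded_subset[of "gos2_jobs g j" 1 p]
  by (cases "g j = 1 \<or> 1 - mu M \<le> sum p Y"; cases "sum p Y + p j \<le> 1 + mu M")
    (auto simp: algA_step_def)

lemma algA_run_exists: "\<exists>Y. algA_run M p g n Y"
proof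
  define Y where "Y = rec_nat {} (\<lambda>k Yk. SOME Z. algA_step M p g (Suc k) Yk Z)"
  have step: "algA_step M p g (Suc k) (Y k) (Y (Suc k))" for k
    unfolding Y_def using someI_ex[OF algA_step_exists] by simp
  show "algA_run M p g n Y"
    unfolding algA_run_def
  proof (intro conjI ballI)
    show "Y 0 = {}"
      by (simp add: Y_def)
  next
    fix j :: nat
    assume "j \<in> {1..n}"
    then show "algA_step M p g j (Y (j - 1)) (Y j)"
      using step[of "j - 1"] by (cases j) auto
  qed
qed

lemma algA_run_step:
  "algA_run M p g n Y \<Longrightarrow> Suc k \<le> n \<Longrightarrow> algA_step M p g (Suc k) (Y k) (Y (Suc k))"
  unfolding algA_run_def by (metis atLeastAtMost_iff diff_Suc_1 le_add1 plus_1_eq_Suc)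

definition algA_invariant :: "real \<Rightarrow> (nat \<Rightarrow> real) \<Rightarrow> (nat \<Rightarrow> nat) \<Rightarrow> nat \<Rightarrow> nat set \<Rightarrow> bool" where
  "algA_invariant M p g k Y \<longleftrightarrow>
     Y \<subseteq> gos2_jobs g k \<and> sum p Y \<le> 1 + mu M \<and>
     (sum p Y < 1 - mu M \<longrightarrow>
        (\<forall>X. X \<subseteq> gos2_jobs g k \<and> sum p X \<le> 1 \<longrightarrow> sum p X \<le> sum p Y))"

lemma algA_invariant_0: "0 \<le> M \<Longrightarrow> algA_invariant M p g 0 {}"
  using mu_pos by (fastforce simp: algA_invariant_def)

locale algA_input =
  fixes M :: real and p :: "nat \<Rightarrow> real" and g :: "nat \<Rightarrow> nat" and n :: nat
  assumes M_nonneg: "0 \<le> M"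
    and size_pos: "\<And>j. j \<in> {1..n} \<Longrightarrow> 0 < p j"
    and gos_cases: "\<And>j. j \<in> {1..n} \<Longrightarrow> g j = 1 \<or> g j = 2"
begin

lemma sum_mono_jobs: "A \<subseteq> B \<Longrightarrow> B \<subseteq> {1..n} \<Longrightarrow> sum p A \<le> sum p B"
proof (rule sum_mono2)
  assume B: "B \<subseteq> {1..n}"
  then show "finite B"
    by (rule finite_subset) simp
  show "\<And>b. b \<in> B - A \<Longrightarrow> 0 \<le> p b"
    using B by (blast intro: size_pos less_imp_le)
qed

lemma sum_nonneg_jobs: "A \<subseteq> {1..n} \<Longrightarrow> 0 \<le> sum p A"
  using sum_mono_jobs[of "{}" A] by simp

lemma sum_Un_le_jobs: "A \<subseteq> {1..n} \<Longrightarrow> B \<subseteq> {1..n} \<Longrightarrow> sum p (A \<union> B) \<le> sum p A + sum p B"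
  using sum_Un[of A B p] sum_nonneg_jobs[of "A \<inter> B"] finite_subset[of _ "{1..n}"] by fastforce

lemma algA_invariant_step:
  assumes k: "Suc k \<le> n"
    and inv: "algA_invariant M p g k Yp"
    and step: "algA_step M p g (Suc k) Yp Yn"
  shows "algA_invariant M p g (Suc k) Yn"
proof -
  let ?j = "Suc k"
  have Yp: "Yp \<subseteq> gos2_jobs g k"
    using inv by (simp add: algA_invariant_def)
  consider "g ?j = 1" | "g ?j = 2" "1 - mu M \<le> sum p Yp"
    | "g ?j = 2" "sum p Yp < 1 - mu M" "sum p Yp + p ?j \<le> 1 + mu M"
    | "g ?j = 2" "sum p Yp < 1 - mu M" "1 + mu M < sum p Yp + p ?j"
    using gos_cases[of ?j] k by fastforce
  then show ?thesis
  proof cases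
    case 1
    then show ?thesis
      using inv step by (simp add: algA_step_def algA_invariant_def gos2_jobs_Suc)
  next
    case 2
    then show ?thesis
      using inv step by (auto simp: algA_step_def algA_invariant_def gos2_jobs_Suc)
  next
    case 3
    have Yn: "Yn = insert ?j Yp"
      using 3 step by (simp add: algA_step_def)
    have "?j \<notin> Yp" and "finite Yp"
      using Yp Suc_notin_gos2_jobs[of k g] finite_subset[OF Yp] by auto
    then have sum_Yn: "sum p Yn = sum p Yp + p ?j"
      using Yn by simp
    have "sum p X \<le> sum p Yn" if X: "X \<subseteq> gos2_jobs g ?j" "sum p X \<le> 1"
      and light: "sum p Yn < 1 - mu M" for X
    proof -
      have Xn: "X \<subseteq> {1..n}"
        using X(1) gos2_jobs_subset k by fastforce
      have "X - {?j} \<subseteq> gos2_jobs g k"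
        using X(1) 3 by (auto simp: gos2_jobs_Suc)
      moreover have "sum p (X - {?j}) \<le> sum p X"
        by (rule sum_mono_jobs) (use Xn in auto)
      ultimately have "sum p (X - {?j}) \<le> sum p Yp"
        using inv X(2) 3 unfolding algA_invariant_def by auto
      moreover have "sum p X \<le> sum p (X - {?j}) + p ?j"
        using size_pos[of ?j] k Xn
        by (cases "?j \<in> X") (auto simp: sum.remove finite_subset)
      ultimately show ?thesis
        using sum_Yn by linarith
    qed
    then show ?thesis
      using 3 Yn Yp sum_Yn by (auto simp: algA_invariant_def gos2_jobs_Suc)
  next
    case 4
    then show ?thesis
      using step mu_pos[OF M_nonneg] by (auto simp: algA_step_def algA_invariant_def)
  qed
qed

lemma algA_run_invariant:
  assumes "algA_run M p g n Y" and "k \<le> n"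
  shows "algA_invariant M p g k (Y k)"
  using assms(2)
proof (induction k)
  case 0
  then show ?case
    using assms(1) algA_invariant_0[OF M_nonneg] by (simp add: algA_run_def)
next
  case (Suc k)
  then show ?case
    using algA_invariant_step algA_run_step[OF assms(1)] by simp
qed

lemma algA_repack_migration:
  assumes k: "Suc k \<le> n" and gos2: "g (Suc k) = 2"
    and inv: "algA_invariant M p g k Yp" and light: "sum p Yp < 1 - mu M"
    and Yn: "Yn \<subseteq> gos2_jobs g (Suc k)" "sum p Yn \<le> 1"
    and max: "\<And>W. W \<subseteq> gos2_jobs g (Suc k) \<Longrightarrow> sum p W \<le> 1 \<Longrightarrow> sum p W \<le> sum p Yn"
    and S: "S \<subseteq> gos2_jobs g n" "sum p S \<le> 1" "sum p ({1..n} - S) \<le> 1"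
  shows "migrated p (Suc k) Yp Yn \<le> sum p Yp + 1 - p (Suc k)"
proof -
  let ?j = "Suc k" and ?G = "gos2_jobs g (Suc k)" and ?Gk = "gos2_jobs g k"
  let ?D = "((Yp - Yn) \<union> (Yn - Yp)) \<inter> {1..<?j}"
  have Yp: "Yp \<subseteq> ?Gk"
    using inv by (simp add: algA_invariant_def)
  have G: "?G = insert ?j ?Gk"
    using gos2 by (simp add: gos2_jobs_Suc)
  have Gn: "?G \<subseteq> {1..n}" and Sn: "S \<subseteq> {1..n}"
    using gos2_jobs_subset[of g ?j] gos2_jobs_subset[of g n] S(1) k by auto
  have "sum p ?D \<le> sum p Yp + 1 - p ?j"
  proof (cases "?j \<in> Yn")
    case True
    have "sum p ?D \<le> sum p (Yp \<union> (Yn - {?j}))"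
      by (rule sum_mono_jobs) (use Yp Yn Gn G in auto)
    also have "\<dots> \<le> sum p Yp + sum p (Yn - {?j})"
      by (rule sum_Un_le_jobs) (use Yp Yn Gn G in auto)
    also have "sum p (Yn - {?j}) = sum p Yn - p ?j"
      using True finite_subset[OF Yn(1)] by (simp add: sum_diff1)
    finally show ?thesis
      using Yn(2) by linarith
  next
    case False
    then have "Yn \<subseteq> ?Gk"
      using Yn(1) G by auto
    then have Yn_le: "sum p Yn \<le> sum p Yp"
      using inv light Yn(2) by (auto simp: algA_invariant_def)
    have "sum p ?D \<le> sum p ?Gk"
      by (rule sum_mono_jobs) (use Yp \<open>Yn \<subseteq> ?Gk\<close> Gn G in auto)
    moreover have "sum p ?G = p ?j + sum p ?Gk"
      using G Suc_notin_gos2_jobs[of k g] by simp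
    moreover have "sum p ?G \<le> 2 * sum p Yn"
    proof (rule sum_le_twice_max_bounded_subset[where S = S and c = 1])
      show "sum p (?G \<inter> S) \<le> 1"
        using sum_mono_jobs[of "?G \<inter> S" S] Sn S(2) by auto
      have "sum p (?G - S) \<le> sum p ({1..n} - S)"
        by (rule sum_mono_jobs) (use Gn in auto)
      then show "sum p (?G - S) \<le> 1"
        using S(3) by linarith
    qed (use max in auto)
    ultimately show ?thesis
      using Yn_le Yn(2) by linarith
  qed
  then show ?thesis
    by (simp add: migrated_def)
qed

lemma algA_step_migration:
  assumes k: "Suc k \<le> n" and inv: "algA_invariant M p g k Yp"
    and step: "algA_step M p g (Suc k) Yp Yn"
    and S: "S \<subseteq> gos2_jobs g n" "sum p S \<le> 1" "sum p ({1..n} - S) \<le> 1"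
  shows "migrated p (Suc k) Yp Yn \<le> M * p (Suc k)"
proof (cases "g (Suc k) = 1 \<or> 1 - mu M \<le> sum p Yp \<or> sum p Yp + p (Suc k) \<le> 1 + mu M")
  case True
  then have "Yn = Yp \<or> Yn = insert (Suc k) Yp"
    using step unfolding algA_step_def by presburger
  then have "((Yp - Yn) \<union> (Yn - Yp)) \<inter> {1..<Suc k} = {}"
    by auto
  then have "migrated p (Suc k) Yp Yn = 0"
    by (simp add: migrated_def)
  then show ?thesis
    using M_nonneg size_pos[of "Suc k"] k by simp
next
  case False
  then have case_iii: "g (Suc k) = 2" "sum p Yp < 1 - mu M" "1 + mu M < sum p Yp + p (Suc k)"
    using gos_cases[of "Suc k"] k by auto
  have "migrated p (Suc k) Yp Yn \<le> sum p Yp + 1 - p (Suc k)"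
    using step False
    by (intro algA_repack_migration[OF k case_iii(1) inv case_iii(2) _ _ _ S])
      (auto simp: algA_step_def)
  also have "\<dots> \<le> M * p (Suc k)"
    using mu_migration_bound[OF M_nonneg case_iii(2,3)] by (simp add: algebra_simps)
  finally show ?thesis .
qed

lemma algA_invariant_makespan:
  assumes inv: "algA_invariant M p g n Y"
    and S: "S \<subseteq> gos2_jobs g n" "sum p S \<le> 1" "sum p ({1..n} - S) \<le> 1"
  shows "makespan p n Y \<le> 1 + mu M"
proof -
  have Y: "Y \<subseteq> {1..n}" and Sn: "S \<subseteq> {1..n}"
    using inv S(1) gos2_jobs_subset[of g n] by (auto simp: algA_invariant_def)
  have total: "sum p {1..n} = sum p S + sum p ({1..n} - S)"
    using Sn by (simp add: sum.subset_diff)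
  have load1: "load1 p n Y = sum p {1..n} - sum p Y"
    using Y by (simp add: load1_def sum_diff)
  have "load1 p n Y \<le> 1 + mu M"
  proof (cases "sum p Y < 1 - mu M")
    case True
    then have "sum p S \<le> sum p Y"
      using inv S by (auto simp: algA_invariant_def)
    then show ?thesis
      using load1 total S(3) mu_pos[OF M_nonneg] by linarith
  next
    case False
    then show ?thesis
      using load1 total S(2,3) by linarith
  qed
  moreover have "load2 p Y \<le> 1 + mu M"
    using inv by (simp add: algA_invariant_def load2_def)
  ultimately show ?thesis
    by (simp add: makespan_def)
qed

end

theorem mainTheorem1:
  fixes M :: real and p :: "nat \<Rightarrow> real" and g :: "nat \<Rightarrow> nat" and n :: nat
  assumes "M \<ge> 5 / 2"
    and "\<forall>j\<in>{1..n}. p j > 0"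
    and "\<forall>j\<in>{1..n}. g j = 1 \<or> g j = 2"
    and "opt_makespan p g n = 1"
  shows "(\<exists>Y. algA_run M p g n Y) \<and>
         (\<forall>Y. algA_run M p g n Y \<longrightarrow>
            (\<forall>j\<in>{1..n}. Y j \<subseteq> gos2_jobs g j) \<and>
            (\<forall>j\<in>{1..n}. migrated p j (Y (j - 1)) (Y j) \<le> M * p j) \<and>
            makespan p n (Y n) \<le> 1 + mu M \<and>
            1 + mu M = (2 * M + 5) / (2 * M + 3))"
proof -
  interpret algA_input M p g n
    using assms(1-3) by unfold_locales auto
  obtain S where S: "S \<subseteq> gos2_jobs g n" "sum p S \<le> 1" "sum p ({1..n} - S) \<le> 1"
    using assms(4) by (rule opt_makespan_witness)
  show ?thesis
  proof (intro conjI allI impI ballI)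
    show "\<exists>Y. algA_run M p g n Y"
      by (rule algA_run_exists)
  next
    fix Y j
    assume "algA_run M p g n Y" and "j \<in> {1..n}"
    then show "Y j \<subseteq> gos2_jobs g j"
      using algA_run_invariant by (simp add: algA_invariant_def)
  next
    fix Y j
    assume run: "algA_run M p g n Y" and "j \<in> {1..n}"
    then obtain k where "j = Suc k" and "Suc k \<le> n"
      by (cases j) auto
    then show "migrated p j (Y (j - 1)) (Y j) \<le> M * p j"
      using algA_step_migration[OF _ algA_run_invariant[OF run] algA_run_step[OF run] S] by simp
  next
    fix Y
    assume "algA_run M p g n Y"
    then show "makespan p n (Y n) \<le> 1 + mu M"
      using algA_invariant_makespan[OF _ S] algA_run_invariant by simp
  next
    show "1 + mu M = (2 * M + 5) / (2 * M + 3)"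
      using M_nonneg by (rule one_plus_mu)
  qed
qed

end
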